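(* Let $G$ be a $6$-regular graph, $\mathcal S$ a canonical path partition of $G$, and $P$ a path component with end-vertices $o_1,o_2$. Let $x_1,x_2\in V_2$ be path neighbors on $P$, with $x_1$ immediately preceding $x_2$ when $P$ is traversed from $o_1$ to $o_2$. Then it is not the case that both $x_1$ goes to $o_2$ and $x_2$ goes to $o_1$.
   Context: All graphs are finite, simple and undirected. A path partition of $G=(V,E)$ is a set of vertex-disjoint paths (single vertices allowed) covering $V$; its members are components. A component with $t\ge3$ vertices is a cycle component if the subgraph induced on its vertex set has a spanning cycle; a one-vertex component is an isolated vertex; every other component is a path component. A path partition is canonical if (1) it has the minimum number of components among all path partitions of $G$; (2) among those, it has the maximum number of cycle components; (3) it has no isolated vertices. Given a canonical path partition $\mathcal S$ of $G$: two vertices are path neighbors if they are consecutive on a path component. An edge of $G$ is a free edge unless it joins two path neighbors or has both endpoints in the same cycle component. $V_1$ is the set of end-vertices of path components together with all vertices of cycle components. $V_2$ is the set of vertices not in $V_1$ that are joined by a free edge to a vertex of $V_1$. A balanced edge is a free edge with one endpoint in $V_1$ and the other in $V_2$; for $x\in V_2$, $y\in V_1$ we say $x$ goes to $y$ if $xy$ is a balanced edge. *)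

theory Defs
  imports Main
begin

definition graph :: "'a set \<Rightarrow> ('a \<Rightarrow> 'a \<Rightarrow> bool) \<Rightarrow> bool" where
  "graph V E \<longleftrightarrow> finite V \<and> (\<forall>u v. E u v \<longrightarrow> u \<in> V \<and> v \<in> V)
     \<and> (\<forall>u v. E u v \<longrightarrow> E v u) \<and> (\<forall>v. \<not> E v v)"

definition regular :: "'a set \<Rightarrow> ('a \<Rightarrow> 'a \<Rightarrow> bool) \<Rightarrow> nat \<Rightarrow> bool" where
  "regular V E k \<longleftrightarrow> (\<forall>v\<in>V. card {u. E v u} = k)"

definition is_path :: "('a \<Rightarrow> 'a \<Rightarrow> bool) \<Rightarrow> 'a list \<Rightarrow> bool" where
  "is_path E p \<longleftrightarrow> p \<noteq> [] \<and> distinct p \<and> (\<forall>i. Suc i < length p \<longrightarrow> E (p!i) (p!Suc i))"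

definition path_partition :: "'a set \<Rightarrow> ('a \<Rightarrow> 'a \<Rightarrow> bool) \<Rightarrow> 'a list set \<Rightarrow> bool" where
  "path_partition V E S \<longleftrightarrow> finite S \<and> (\<forall>p\<in>S. is_path E p)
     \<and> (\<forall>p\<in>S. \<forall>q\<in>S. p \<noteq> q \<longrightarrow> set p \<inter> set q = {})
     \<and> \<Union>(set ` S) = V"

definition has_spanning_cycle :: "('a \<Rightarrow> 'a \<Rightarrow> bool) \<Rightarrow> 'a set \<Rightarrow> bool" where
  "has_spanning_cycle E X \<longleftrightarrow> (\<exists>c. distinct c \<and> set c = X \<and> length c \<ge> 3
     \<and> (\<forall>i. Suc i < length c \<longrightarrow> E (c!i) (c!Suc i)) \<and> E (last c) (hd c))"

definition cycle_comp :: "('a \<Rightarrow> 'a \<Rightarrow> bool) \<Rightarrow> 'a list \<Rightarrow> bool" where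
  "cycle_comp E p \<longleftrightarrow> length p \<ge> 3 \<and> has_spanning_cycle E (set p)"

definition isolated_comp :: "'a list \<Rightarrow> bool" where
  "isolated_comp p \<longleftrightarrow> length p = 1"

definition path_comp :: "('a \<Rightarrow> 'a \<Rightarrow> bool) \<Rightarrow> 'a list \<Rightarrow> bool" where
  "path_comp E p \<longleftrightarrow> \<not> cycle_comp E p \<and> \<not> isolated_comp p"

definition num_cycle_comps :: "('a \<Rightarrow> 'a \<Rightarrow> bool) \<Rightarrow> 'a list set \<Rightarrow> nat" where
  "num_cycle_comps E S = card {p\<in>S. cycle_comp E p}"

definition canonical :: "'a set \<Rightarrow> ('a \<Rightarrow> 'a \<Rightarrow> bool) \<Rightarrow> 'a list set \<Rightarrow> bool" where
  "canonical V E S \<longleftrightarrow> path_partition V E S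
     \<and> (\<forall>T. path_partition V E T \<longrightarrow> card S \<le> card T)
     \<and> (\<forall>T. path_partition V E T \<and> card T = card S \<longrightarrow> num_cycle_comps E T \<le> num_cycle_comps E S)
     \<and> (\<forall>p\<in>S. \<not> isolated_comp p)"

definition path_neighbors :: "('a \<Rightarrow> 'a \<Rightarrow> bool) \<Rightarrow> 'a list set \<Rightarrow> 'a \<Rightarrow> 'a \<Rightarrow> bool" where
  "path_neighbors E S u v \<longleftrightarrow> (\<exists>p\<in>S. path_comp E p \<and> (\<exists>i. Suc i < length p \<and>
     ((p!i = u \<and> p!Suc i = v) \<or> (p!i = v \<and> p!Suc i = u))))"

definition free_edge :: "('a \<Rightarrow> 'a \<Rightarrow> bool) \<Rightarrow> 'a list set \<Rightarrow> 'a \<Rightarrow> 'a \<Rightarrow> bool" where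
  "free_edge E S u v \<longleftrightarrow> E u v \<and> \<not> path_neighbors E S u v
     \<and> \<not> (\<exists>p\<in>S. cycle_comp E p \<and> u \<in> set p \<and> v \<in> set p)"

definition V1 :: "('a \<Rightarrow> 'a \<Rightarrow> bool) \<Rightarrow> 'a list set \<Rightarrow> 'a set" where
  "V1 E S = {v. \<exists>p\<in>S. (path_comp E p \<and> (v = hd p \<or> v = last p)) \<or> (cycle_comp E p \<and> v \<in> set p)}"

definition V2 :: "'a set \<Rightarrow> ('a \<Rightarrow> 'a \<Rightarrow> bool) \<Rightarrow> 'a list set \<Rightarrow> 'a set" where
  "V2 V E S = {x\<in>V. x \<notin> V1 E S \<and> (\<exists>y\<in>V1 E S. free_edge E S x y)}"

definition balanced_edge :: "'a set \<Rightarrow> ('a \<Rightarrow> 'a \<Rightarrow> bool) \<Rightarrow> 'a list set \<Rightarrow> 'a \<Rightarrow> 'a \<Rightarrow> bool" where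
  "balanced_edge V E S u v \<longleftrightarrow> free_edge E S u v \<and>
     ((u \<in> V1 E S \<and> v \<in> V2 V E S) \<or> (v \<in> V1 E S \<and> u \<in> V2 V E S))"

definition goes_to :: "'a set \<Rightarrow> ('a \<Rightarrow> 'a \<Rightarrow> bool) \<Rightarrow> 'a list set \<Rightarrow> 'a \<Rightarrow> 'a \<Rightarrow> bool" where
  "goes_to V E S x y \<longleftrightarrow> x \<in> V2 V E S \<and> y \<in> V1 E S \<and> balanced_edge V E S x y"

end

theory Submission
  imports Defs
begin

text \<open>If the vertices at positions i and i+1 of a path component are joined to its last and its
  first vertex respectively, then walking from the first vertex to position i, jumping to the last
  vertex, walking back to position i+1 and closing up at the first vertex is a Hamiltonian cycle of
  the component, which therefore is a cycle component and not a path component.\<close>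

lemma is_path_iff_successively:
  "is_path E p \<longleftrightarrow> p \<noteq> [] \<and> distinct p \<and> successively E p"
  by (simp add: is_path_def successively_conv_nth)

lemma successively_append_rev:
  assumes "symp E"
    and "successively E xs" and "successively E ys"
    and "xs \<noteq> []" and "ys \<noteq> []" and "E (last xs) (last ys)"
  shows "successively E (xs @ rev ys)"
  using assms by (auto simp: successively_append_iff hd_rev intro: successively_mono dest: sympD)

lemma has_spanning_cycle_if_crossing_chords:
  assumes sym: "symp E"
    and path: "is_path E p" and "0 < i" and "Suc i < length p"
    and to_last: "E (p ! i) (last p)" and to_hd: "E (p ! Suc i) (hd p)"
  shows "has_spanning_cycle E (set p)"
proof -
  define xs where "xs = take (Suc i) p"
  define ys where "ys = drop (Suc i) p"
  define c where "c = xs @ rev ys"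
  have p_split: "p = xs @ ys" by (simp add: xs_def ys_def)
  have ne: "xs \<noteq> []" "ys \<noteq> []" using \<open>Suc i < length p\<close> by (auto simp: xs_def ys_def)
  have last_xs: "last xs = p ! i"
    using \<open>Suc i < length p\<close> unfolding xs_def by (subst last_conv_nth) auto
  have last_ys: "last ys = last p" using ne p_split by simp
  have "successively E xs" "successively E ys"
    using path p_split by (metis is_path_iff_successively successively_append_iff)+
  moreover have "E (last xs) (last ys)" using to_last by (simp only: last_xs last_ys)
  ultimately have "successively E c"
    unfolding c_def by (rule successively_append_rev[where E = E, OF sym _ _ ne])
  moreover have "E (last c) (hd c)"
  proof -
    have "hd ys = p ! Suc i"
      using \<open>Suc i < length p\<close> by (simp add: ys_def hd_drop_conv_nth)
    then show ?thesis using ne p_split to_hd sym by (simp add: c_def last_rev sympD)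
  qed
  moreover have "distinct c" "set c = set p" "length c = length p"
    using path p_split by (auto simp: c_def is_path_def)
  moreover have "length p \<ge> 3" using \<open>0 < i\<close> \<open>Suc i < length p\<close> by simp
  ultimately show ?thesis
    unfolding has_spanning_cycle_def successively_conv_nth[symmetric] by auto
qed

theorem mainTheorem5:
  fixes V :: "'a set" and E :: "'a \<Rightarrow> 'a \<Rightarrow> bool" and S :: "'a list set"
    and P :: "'a list" and i :: nat
  assumes "graph V E" and "regular V E 6"
    and "canonical V E S"
    and "P \<in> S" and "path_comp E P"
    and "Suc i < length P"
    and "P ! i \<in> V2 V E S" and "P ! Suc i \<in> V2 V E S"
  shows "\<not> (goes_to V E S (P ! i) (last P) \<and> goes_to V E S (P ! Suc i) (hd P))"
proof
  assume "goes_to V E S (P ! i) (last P) \<and> goes_to V E S (P ! Suc i) (hd P)"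
  then have to_last: "E (P ! i) (last P)" and to_hd: "E (P ! Suc i) (hd P)"
    by (auto simp: goes_to_def balanced_edge_def free_edge_def)
  have sym: "symp E" using \<open>graph V E\<close> by (simp add: graph_def symp_def)
  have path: "is_path E P"
    using \<open>canonical V E S\<close> \<open>P \<in> S\<close> by (auto simp: canonical_def path_partition_def)
  have "hd P \<in> V1 E S" using \<open>P \<in> S\<close> \<open>path_comp E P\<close> by (auto simp: V1_def)
  moreover have "P ! i \<notin> V1 E S" using \<open>P ! i \<in> V2 V E S\<close> by (simp add: V2_def)
  ultimately have "0 < i" using \<open>Suc i < length P\<close> by (cases P; cases i) auto
  then have "has_spanning_cycle E (set P)"
    by (rule has_spanning_cycle_if_crossing_chords[OF sym path _ \<open>Suc i < length P\<close> to_last to_hd])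
  then have "cycle_comp E P"
    using \<open>0 < i\<close> \<open>Suc i < length P\<close> by (simp add: cycle_comp_def)
  with \<open>path_comp E P\<close> show False by (simp add: path_comp_def)
qed

end
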